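(* Let $e\geq 2$ and $N=\langle\sigma\rangle$ cyclic of order $2^e$. Every transitive subgroup $G$ of $\mathrm{Hol}(N)$ has an element of order $2^{e-1}$. Moreover, if $G$ has no element of order $2^e$, then $b-1\equiv 2v\pmod 4$ for all $[\sigma^v,\varphi_b]\in G$, and in particular $\mathrm{Stab}_G(1_N)\subseteq\langle\varphi_5\rangle$.
   Context: For an odd integer $a$, $\varphi_a\in\mathrm{Aut}(N)$ is $\sigma\mapsto\sigma^a$. Elements of $\mathrm{Hol}(N)=N\rtimes\mathrm{Aut}(N)$ are written $[\sigma^u,\varphi_a]$ with $[\sigma^u,\varphi_a][\sigma^v,\varphi_b]=[\sigma^{u+va},\varphi_{ab}]$. $\mathrm{Hol}(N)$ acts on $N$ by $[\sigma^u,\varphi_a]\cdot\sigma^v=\sigma^{u+av}$; a subgroup is transitive if it acts transitively on $N$; $\mathrm{Stab}_G(1_N)=G\cap\mathrm{Aut}(N)$. *)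

theory Defs
  imports "HOL-Algebra.Algebra" "HOL-Number_Theory.Cong"
begin

text \<open>N = <sigma> cyclic of order 2^e; sigma^u is represented by u in {0..<2^e}.
  The automorphism phi_a (a odd) is represented by a mod 2^e.
  The element [sigma^u, phi_a] of Hol(N) is the pair (u, a) with canonical
  representatives 0 <= u, a < 2^e, a odd.\<close>

definition hol :: "nat \<Rightarrow> (int \<times> int) monoid" where
  "hol e = \<lparr> carrier = {(u, a). 0 \<le> u \<and> u < 2^e \<and> 0 \<le> a \<and> a < 2^e \<and> odd a},
             monoid.mult = (\<lambda>(u, a) (v, b). ((u + v * a) mod 2^e, (a * b) mod 2^e)),
             monoid.one = (0, 1 mod 2^e) \<rparr>"

definition hol_act :: "nat \<Rightarrow> int \<times> int \<Rightarrow> int \<Rightarrow> int" where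
  "hol_act e g v = (fst g + snd g * v) mod 2^e"

definition hol_transitive :: "nat \<Rightarrow> (int \<times> int) set \<Rightarrow> bool" where
  "hol_transitive e G \<longleftrightarrow>
     (\<forall>x \<in> {0..<2^e}. \<forall>y \<in> {0..<2^e}. \<exists>g \<in> G. hol_act e g x = y)"

definition hol_stab :: "nat \<Rightarrow> (int \<times> int) set \<Rightarrow> (int \<times> int) set" where
  "hol_stab e G = {g \<in> G. hol_act e g 0 = 0}"

end

theory Submission
  imports Defs
begin

text \<open>The n-th power of (v, b) = [\<sigma>^v, \<phi>_b] is (v (1 + b + ... + b^(n-1)), b^n).
  If b \<equiv> 1 (mod 4), the sum of the first 2^k powers of b is 2^k times an odd number, so (v, b)
  has order 2^e when v is odd and order 2^(e-1) when v \<equiv> 2 (mod 4).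

  If G has an element of order 2^e, its square has order 2^(e-1). Otherwise G contains no
  (v, b) with v odd and b \<equiv> 1 (mod 4). Transitivity supplies some (1, c) in G, which forces
  c \<equiv> 3 (mod 4), and right multiplication by (1, c) would turn an element with v even and
  b \<equiv> 3 (mod 4) into a forbidden one. Hence b - 1 \<equiv> 2v (mod 4) on all of G; in particular the
  element (2, c') supplied by transitivity has order 2^(e-1), and every stabilizer element (0, b)
  has b \<equiv> 1 (mod 4), which makes b a power of 5 modulo 2^e.\<close>

lemma mod_add_mult_mod_eq:
  fixes x y z m :: int
  shows "(x mod m + y * (z mod m)) mod m = (x + y * z) mod m"
    and "(x + (y mod m) * z) mod m = (x + y * z) mod m"
  by (metis mod_add_left_eq mod_add_right_eq mod_mult_right_eq)
    (metis mod_add_right_eq mod_mult_left_eq)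

lemma odd_mod_two_pow: "odd (x::int) \<Longrightarrow> e \<ge> 1 \<Longrightarrow> odd (x mod 2^e)"
  by (simp flip: take_bit_eq_mod)

lemma mod_two_pow_mod_four: "e \<ge> 2 \<Longrightarrow> (x::int) mod 2^e mod 4 = x mod 4"
  using le_imp_power_dvd[of 2 e "2::int"] by (simp add: mod_mod_cancel)

lemma sum_gp_lessThan_add:
  fixes b :: "'a::comm_semiring_1"
  shows "(\<Sum>i<n + m. b^i) = (\<Sum>i<n. b^i) + b^n * (\<Sum>i<m. b^i)"
  by (induction m) (simp_all add: power_add algebra_simps)

lemma sum_gp_two_pow_eq_mult_odd:
  fixes b :: int
  assumes "b mod 4 = 1"
  shows "\<exists>c. odd c \<and> (\<Sum>i<2^k. b^i) = 2^k * c"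
proof (induction k)
  case 0 then show ?case by simp
next
  case (Suc k)
  then obtain c where c: "odd c" "(\<Sum>i<2^k. b^i) = 2^k * c" by blast
  have "b^(2^k) mod 4 = 1" using assms power_mod[of b 4 "2^k", symmetric] by simp
  then obtain q where q: "b^(2^k) = 4 * q + 1"
    using div_mult_mod_eq[of "b^(2^k)" 4] by (metis mult.commute)
  have "(\<Sum>i<2^Suc k. b^i) = (\<Sum>i<2^k. b^i) * (1 + b^(2^k))"
    using sum_gp_lessThan_add[of b "2^k" "2^k"] by (simp add: mult_2 algebra_simps)
  also have "\<dots> = 2^Suc k * (c * (1 + 2 * q))" using c q by (simp add: algebra_simps)
  finally show ?case using c by (intro exI[of _ "c * (1 + 2 * q)"]) simp
qed

lemma five_pow_two_pow: "\<exists>q. odd q \<and> (5::int)^(2^d) = 1 + 2^(d + 2) * q"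
proof -
  obtain c where c: "odd c" "(\<Sum>i<2^d. (5::int)^i) = 2^d * c"
    using sum_gp_two_pow_eq_mult_odd[of 5] by auto
  have "(5::int)^(2^d) = 1 + 2^(d + 2) * c"
    using power_diff_1_eq[of "5::int" "2^d"] c(2) by (simp add: power_add algebra_simps)
  with c(1) show ?thesis by blast
qed

lemma exists_pow_five_cong:
  fixes b :: int
  assumes "b mod 4 = 1"
  shows "\<exists>k. [5^k = b] (mod 2^(d + 2))"
proof (induction d)
  case 0 then show ?case using assms by (intro exI[of _ 0]) (simp add: cong_def)
next
  case (Suc d)
  define M :: int where "M = 2^(d + 2)"
  obtain k t where t: "5^k - b = M * t"
    using Suc by (metis M_def cong_iff_dvd_diff dvd_def)
  have "odd b" using assms by presburger
  show ?case
  proof (cases "even t")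
    case True
    then have "2 * M dvd 5^k - b" using t by simp
    then show ?thesis by (intro exI[of _ k]) (simp add: M_def cong_iff_dvd_diff)
  next
    case False
    obtain q where q: "odd q" "(5::int)^(2^d) = 1 + M * q" using five_pow_two_pow M_def by blast
    have "(5::int)^(k + 2^d) - b = (b + M * t) * (1 + M * q) - b" using t q by (simp add: power_add)
    also have "\<dots> = M * (t + q * b + M * t * q)" by (simp add: algebra_simps)
    finally have "(5::int)^(k + 2^d) - b = M * (t + q * b + M * t * q)" .
    moreover have "even (t + q * b + M * t * q)" using False q(1) \<open>odd b\<close> by (simp add: M_def)
    ultimately have "2 * M dvd 5^(k + 2^d) - b" by auto
    then show ?thesis by (intro exI[of _ "k + 2^d"]) (simp add: M_def cong_iff_dvd_diff)
  qed
qed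

lemma (in group) ord_eq_prime_power:
  assumes "x \<in> carrier G" "Factorial_Ring.prime p" "x [^] (p ^ Suc k) = \<one>" "x [^] (p ^ k) \<noteq> \<one>"
  shows "ord x = p ^ Suc k"
proof -
  obtain i where i: "i \<le> Suc k" "ord x = p ^ i"
    using assms(1,3) pow_eq_id divides_primepow_nat[OF assms(2)] by blast
  have "\<not> ord x dvd p ^ k" using assms(1,4) pow_eq_id by blast
  then have "\<not> i \<le> k" using i(2) le_imp_power_dvd by metis
  with i show ?thesis by (simp add: le_Suc_eq)
qed

lemma (in group) ord_mult_self:
  assumes "x \<in> carrier G" "ord x = 2 * n"
  shows "ord (x \<otimes> x) = n"
proof -
  have "x [^] (2::nat) = x \<otimes> x" using assms(1) by (simp add: numeral_2_eq_2)
  then show ?thesis using ord_pow[OF assms(1), of 2] assms(2) by simp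
qed

lemma hol_mult [simp]: "(u, a) \<otimes>\<^bsub>hol e\<^esub> (v, b) = ((u + v * a) mod 2^e, (a * b) mod 2^e)"
  by (simp add: hol_def)

lemma hol_one [simp]: "\<one>\<^bsub>hol e\<^esub> = (0, 1 mod 2^e)"
  by (simp add: hol_def)

lemma mem_carrier_hol_iff:
  "(u, a) \<in> carrier (hol e) \<longleftrightarrow> 0 \<le> u \<and> u < 2^e \<and> 0 \<le> a \<and> a < 2^e \<and> odd a"
  by (simp add: hol_def)

lemma group_hol:
  assumes "e \<ge> 1"
  shows "group (hol e)"
proof (rule groupI)
  fix x y assume "x \<in> carrier (hol e)" "y \<in> carrier (hol e)"
  then show "x \<otimes>\<^bsub>hol e\<^esub> y \<in> carrier (hol e)"
    using assms by (cases x; cases y) (auto simp: mem_carrier_hol_iff odd_mod_two_pow)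
next
  show "\<one>\<^bsub>hol e\<^esub> \<in> carrier (hol e)" using assms by (simp add: mem_carrier_hol_iff)
next
  fix x y z assume "x \<in> carrier (hol e)" "y \<in> carrier (hol e)" "z \<in> carrier (hol e)"
  then show "x \<otimes>\<^bsub>hol e\<^esub> y \<otimes>\<^bsub>hol e\<^esub> z = x \<otimes>\<^bsub>hol e\<^esub> (y \<otimes>\<^bsub>hol e\<^esub> z)"
    by (cases x; cases y; cases z)
      (simp only: hol_mult prod.case mod_add_mult_mod_eq, simp add: algebra_simps mod_simps)
next
  fix x assume "x \<in> carrier (hol e)"
  then show "\<one>\<^bsub>hol e\<^esub> \<otimes>\<^bsub>hol e\<^esub> x = x"
    using assms by (cases x) (simp add: mem_carrier_hol_iff)
next
  fix x assume x: "x \<in> carrier (hol e)"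
  obtain u a where xe: "x = (u, a)" by (cases x)
  have "coprime a (2^e)" using x xe by (simp add: mem_carrier_hol_iff)
  then obtain c where "[a * c = 1] (mod 2^e)" using cong_solve_coprime_int by blast
  define b where "b = c mod 2^e"
  have ab: "(a * b) mod 2^e = 1"
    using \<open>[a * c = 1] (mod 2^e)\<close> assms unfolding b_def cong_def by (simp add: mod_simps)
  then have "odd b"
    using assms by (metis even_mult_iff even_take_bit_eq odd_one take_bit_eq_mod)
  then have "((- u * b) mod 2^e, b) \<in> carrier (hol e)" by (simp add: mem_carrier_hol_iff b_def)
  moreover have "((- u * b) mod 2^e, b) \<otimes>\<^bsub>hol e\<^esub> x = \<one>\<^bsub>hol e\<^esub>"
    using ab assms by (simp add: xe mod_simps algebra_simps)
  ultimately show "\<exists>y\<in>carrier (hol e). y \<otimes>\<^bsub>hol e\<^esub> x = \<one>\<^bsub>hol e\<^esub>" by blast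
qed

lemma hol_pow: "(v, b) [^]\<^bsub>hol e\<^esub> n = (v * (\<Sum>i<n. b^i) mod 2^e, b^n mod 2^e)"
proof (induction n)
  case (Suc n)
  have "(v, b) [^]\<^bsub>hol e\<^esub> Suc n
      = (v * (\<Sum>i<n. b^i) mod 2^e, b^n mod 2^e) \<otimes>\<^bsub>hol e\<^esub> (v, b)"
    using Suc by simp
  also have "\<dots> = ((v * (\<Sum>i<n. b^i) + v * b^n) mod 2^e, b^n * b mod 2^e)"
    by (simp only: hol_mult prod.case mod_add_mult_mod_eq mod_mult_left_eq)
  finally show ?case by (simp add: algebra_simps)
qed simp

text \<open>The bound j \<le> 2 is needed because b^(2^k) is only known to be 1 modulo 2^(k+2).\<close>

lemma hol_ord_eq:
  assumes vb: "(v, b) \<in> carrier (hol e)" and b: "b mod 4 = 1"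
    and v: "v = 2^j * w" "odd w" and j: "j \<le> 2" "j < e"
  shows "group.ord (hol e) (v, b) = 2^(e - j)"
proof -
  interpret group "hol e" using group_hol j(2) by simp
  obtain k where k: "e = j + Suc k" using j(2) by (metis add_Suc_right less_imp_Suc_add)
  obtain c where c: "odd c" "(\<Sum>i<2^Suc k. b^i) = 2^Suc k * c"
    using sum_gp_two_pow_eq_mult_odd[OF b] by blast
  obtain c' where c': "odd c'" "(\<Sum>i<2^k. b^i) = 2^k * c'"
    using sum_gp_two_pow_eq_mult_odd[OF b] by blast
  obtain r where r: "b - 1 = 4 * r"
    using b div_mult_mod_eq[of b 4] by (metis add_diff_cancel_right' mult.commute)
  have "v * (\<Sum>i<2^Suc k. b^i) = 2^e * (w * c)" using v c k by (simp add: power_add algebra_simps)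
  moreover have "b^(2^Suc k) = 1 + 2^e * (2^(2 - j) * r * c)"
  proof -
    have "b^(2^Suc k) - 1 = 4 * r * (2^Suc k * c)" using power_diff_1_eq[of b "2^Suc k"] r c by simp
    also have "\<dots> = 2^(2 + Suc k) * (r * c)" by (simp add: power_add)
    also have "2 + Suc k = e + (2 - j)" using k j by simp
    finally show ?thesis by (simp add: power_add)
  qed
  ultimately have "(v, b) [^]\<^bsub>hol e\<^esub> ((2::nat)^Suc k) = \<one>\<^bsub>hol e\<^esub>"
    by (simp only: hol_pow) simp
  moreover have "v * (\<Sum>i<2^k. b^i) = 2^(j + k) * (w * c')"
    using v c' by (simp add: power_add algebra_simps)
  then have "(v, b) [^]\<^bsub>hol e\<^esub> ((2::nat)^k) \<noteq> \<one>\<^bsub>hol e\<^esub>"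
    using c'(1) v(2) k by (simp add: hol_pow mod_eq_0_iff_dvd)
  ultimately show ?thesis using ord_eq_prime_power[OF vb] k by simp
qed

lemma pow_five_mem_generate:
  assumes "e \<ge> 1"
  shows "(0, 5^k mod 2^e) \<in> generate (hol e) {(0, 5 mod 2^e)}"
proof -
  interpret group "hol e" using group_hol assms .
  have "(0, 5 mod 2^e) \<in> carrier (hol e)"
    using assms by (simp add: mem_carrier_hol_iff odd_mod_two_pow)
  then have "(0, 5 mod 2^e) [^]\<^bsub>hol e\<^esub> int k \<in> generate (hol e) {(0, 5 mod 2^e)}"
    using generate_pow by blast
  then show ?thesis by (simp add: int_pow_int hol_pow power_mod)
qed

lemma hol_stab_subset_generate_five:
  assumes e: "e \<ge> 2" and G: "subgroup G (hol e)"
    and cong: "\<And>v b. (v, b) \<in> G \<Longrightarrow> [b - 1 = 2 * v] (mod 4)"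
  shows "hol_stab e G \<subseteq> generate (hol e) {(0, 5 mod 2^e)}"
proof
  fix g assume g: "g \<in> hol_stab e G"
  obtain u b where ub: "g = (u, b)" by (cases g)
  have "(u, b) \<in> G" using g ub by (simp add: hol_stab_def)
  then have "(u, b) \<in> carrier (hol e)" using subgroup.subset[OF G] by blast
  moreover have "u mod 2^e = 0" using g ub by (simp add: hol_stab_def hol_act_def)
  ultimately have u: "u = 0" and b: "0 \<le> b" "b < 2^e" by (simp_all add: mem_carrier_hol_iff)
  have "[b - 1 = 0] (mod 4)" using cong \<open>(u, b) \<in> G\<close> u by fastforce
  then have "b mod 4 = 1" unfolding cong_def by presburger
  moreover have "e - 2 + 2 = e" using e by simp
  ultimately obtain k where "[5^k = b] (mod 2^e)" using exists_pow_five_cong by metis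
  then have "b = 5^k mod 2^e" using b by (simp add: cong_def)
  then show "g \<in> generate (hol e) {(0, 5 mod 2^e)}"
    using pow_five_mem_generate[of e k] ub u e by simp
qed

lemma hol_transitive_ex_fst:
  assumes "subgroup G (hol e)" "hol_transitive e G" "0 \<le> u" "u < 2^e"
  shows "\<exists>a. (u, a) \<in> G"
proof -
  obtain g where g: "g \<in> G" "hol_act e g 0 = u" using assms unfolding hol_transitive_def by force
  then have "fst g = u" using subgroup.subset[OF assms(1)]
    by (cases g) (auto simp: hol_act_def mem_carrier_hol_iff)
  with g(1) show ?thesis by (metis prod.collapse)
qed

lemma subgroup_hol_cong_mod_four:
  assumes e: "e \<ge> 2" and G: "subgroup G (hol e)" and c: "(1, c) \<in> G"
    and no_odd: "\<And>v b. (v, b) \<in> G \<Longrightarrow> odd v \<Longrightarrow> b mod 4 \<noteq> 1"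
    and vb: "(v, b) \<in> G"
  shows "[b - 1 = 2 * v] (mod 4)"
proof -
  have odd: "odd b" "odd c" using vb c subgroup.subset[OF G] by (auto simp: mem_carrier_hol_iff)
  then have "c mod 4 = 3" using no_odd[OF c] by presburger
  have "\<not> (even v \<and> b mod 4 = 3)"
  proof
    assume v: "even v \<and> b mod 4 = 3"
    have "(v, b) \<otimes>\<^bsub>hol e\<^esub> (1, c) \<in> G" using vb c by (rule subgroup.m_closed[OF G])
    moreover have "odd ((v + b) mod 2^e)" using v odd e by (simp add: odd_mod_two_pow)
    moreover have "(b * c) mod 2^e mod 4 = 1"
      using v \<open>c mod 4 = 3\<close> e by (simp add: mod_two_pow_mod_four mod_mult_eq[of b 4 c, symmetric])
    ultimately show False using no_odd by simp
  qed
  moreover have "\<not> (odd v \<and> b mod 4 = 1)" using no_odd[OF vb] by blast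
  ultimately show ?thesis using odd(1) unfolding cong_def by presburger
qed

theorem lemma5p1:
  fixes e :: nat and G :: "(int \<times> int) set"
  assumes "e \<ge> 2"
    and "subgroup G (hol e)"
    and "hol_transitive e G"
  shows "(\<exists>g \<in> G. group.ord (hol e) g = 2^(e-1))
    \<and> ((\<not> (\<exists>g \<in> G. group.ord (hol e) g = 2^e)) \<longrightarrow>
         (\<forall>v b. (v, b) \<in> G \<longrightarrow> [b - 1 = 2 * v] (mod 4))
         \<and> hol_stab e G \<subseteq> generate (hol e) {(0, 5 mod 2^e)})"
proof -
  interpret group "hol e" using group_hol assms(1) by simp
  interpret G: subgroup G "hol e" by fact
  have "(4::int) \<le> 2^e" using power_increasing[OF assms(1), of "2::int"] by simp
  then obtain c1 c2 where c1: "(1, c1) \<in> G" and c2: "(2, c2) \<in> G"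
    using hol_transitive_ex_fst[OF assms(2,3), of 1] hol_transitive_ex_fst[OF assms(2,3), of 2]
    by auto
  show ?thesis
  proof (cases "\<exists>g \<in> G. ord g = 2^e")
    case True
    moreover have "(2::nat)^e = 2 * 2^(e - 1)" using assms(1) by (cases e) auto
    ultimately obtain g where "g \<in> G" "ord g = 2 * 2^(e - 1)" by auto
    then have "g \<otimes>\<^bsub>hol e\<^esub> g \<in> G" "ord (g \<otimes>\<^bsub>hol e\<^esub> g) = 2^(e - 1)"
      using ord_mult_self by auto
    with True show ?thesis by blast
  next
    case False
    have "b mod 4 \<noteq> 1" if "(v, b) \<in> G" "odd v" for v b
      using hol_ord_eq[of v b e 0 v] that False G.subset assms(1) by auto
    then have cong: "\<And>v b. (v, b) \<in> G \<Longrightarrow> [b - 1 = 2 * v] (mod 4)"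
      using subgroup_hol_cong_mod_four[OF assms(1,2) c1] by blast
    then have "c2 mod 4 = 1" using cong[OF c2] unfolding cong_def by presburger
    then have "ord (2, c2) = 2^(e - 1)"
      using hol_ord_eq[of 2 c2 e 1 1] c2 G.subset assms(1) by auto
    then show ?thesis
      using c2 cong hol_stab_subset_generate_five[OF assms(1,2)] by blast
  qed
qed

end
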